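(* Let $\Phi=(A;A^*;\{E_i\}_{i=0}^d;\{E^*_i\}_{i=0}^d)$ be a Leonard system in $\mathcal A$, with $x_i$ and $p_i$ as defined below. Then $x_1x_2\cdots x_i\neq 0$ and $$E^*_i=\frac{p_i(A)\,E^*_0\,p_i(A)}{x_1x_2\cdots x_i}\qquad(0\le i\le d).$$
   Context: Let $\mathbb K$ be a field, $d\ge 0$ an integer, and $\mathcal A$ a $\mathbb K$-algebra isomorphic to the full matrix algebra $\mathrm{Mat}_{d+1}(\mathbb K)$; $I$ is its identity. An element of $\mathcal A$ is multiplicity-free if it has $d+1$ mutually distinct eigenvalues in $\mathbb K$. If $A$ is multiplicity-free with eigenvalues $\theta_0,\dots,\theta_d$, the primitive idempotent of $A$ associated with $\theta_i$ is $E_i=\prod_{j\ne i}(A-\theta_jI)/(\theta_i-\theta_j)$. A Leonard system in $\mathcal A$ is a sequence $\Phi=(A;A^*;\{E_i\}_{i=0}^d;\{E^*_i\}_{i=0}^d)$ such that (i) $A,A^*\in\mathcal A$ are multiplicity-free; (ii) $E_0,\dots,E_d$ is an ordering of the primitive idempotents of $A$; (iii) $E^*_0,\dots,E^*_d$ is an ordering of the primitive idempotents of $A^*$; (iv) $E_iA^*E_j=0$ if $|i-j|>1$ and $E_iA^*E_j\ne0$ if $|i-j|=1$ ($0\le i,j\le d$); (v) $E^*_iAE^*_j=0$ if $|i-j|>1$ and $E^*_iAE^*_j\ne0$ if $|i-j|=1$ ($0\le i,j\le d$). Here $A^*$ is merely notation (not an adjoint). Define $a_i=\mathrm{tr}(E^*_iA)$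 ($0\le i\le d$), $x_i=\mathrm{tr}(E^*_iAE^*_{i-1}A)$ ($1\le i\le d$), $x_0=0$. Define polynomials $p_0,\dots,p_{d+1}\in\mathbb K[\lambda]$ by $p_{-1}=0$, $p_0=1$, and $\lambda p_i=p_{i+1}+a_ip_i+x_ip_{i-1}$ for $0\le i\le d$. The empty product $x_1\cdots x_0$ equals $1$. *)

theory Defs
  imports "Jordan_Normal_Form.Char_Poly" "HOL-Computational_Algebra.Polynomial"
begin

text \<open>The algebra is realised concretely as the (d+1) x (d+1) matrices over a field.\<close>

definition mat_trace :: "'a::comm_ring_1 mat \<Rightarrow> 'a" where
  "mat_trace M = (\<Sum>i<dim_row M. M $$ (i, i))"

definition poly_mat :: "'a::comm_ring_1 poly \<Rightarrow> 'a mat \<Rightarrow> 'a mat" where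
  "poly_mat p M = fold_coeffs (\<lambda>c B. c \<cdot>\<^sub>m 1\<^sub>m (dim_row M) + M * B) p (0\<^sub>m (dim_row M) (dim_row M))"

definition prim_idem :: "nat \<Rightarrow> 'a::field mat \<Rightarrow> (nat \<Rightarrow> 'a) \<Rightarrow> nat \<Rightarrow> 'a mat" where
  "prim_idem d M \<theta> i =
     foldr (*) (map (\<lambda>j. (1 / (\<theta> i - \<theta> j)) \<cdot>\<^sub>m (M - \<theta> j \<cdot>\<^sub>m 1\<^sub>m (d+1)))
                    (filter (\<lambda>j. j \<noteq> i) [0..<d+1])) (1\<^sub>m (d+1))"

definition multiplicity_free :: "nat \<Rightarrow> 'a::field mat \<Rightarrow> bool" where
  "multiplicity_free d M \<longleftrightarrow>
     M \<in> carrier_mat (d+1) (d+1) \<and>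
     (\<exists>\<theta>. inj_on \<theta> {..d} \<and> (\<forall>i\<le>d. eigenvalue M (\<theta> i)))"

definition prim_idem_ordering :: "nat \<Rightarrow> 'a::field mat \<Rightarrow> (nat \<Rightarrow> 'a mat) \<Rightarrow> bool" where
  "prim_idem_ordering d M E \<longleftrightarrow>
     (\<exists>\<theta>. inj_on \<theta> {..d} \<and> (\<forall>i\<le>d. eigenvalue M (\<theta> i)) \<and>
          (\<forall>i\<le>d. E i = prim_idem d M \<theta> i))"

definition leonard_system ::
  "nat \<Rightarrow> 'a::field mat \<Rightarrow> 'a mat \<Rightarrow> (nat \<Rightarrow> 'a mat) \<Rightarrow> (nat \<Rightarrow> 'a mat) \<Rightarrow> bool" where
  "leonard_system d A As E Es \<longleftrightarrow>
     multiplicity_free d A \<and> multiplicity_free d As \<and>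
     prim_idem_ordering d A E \<and> prim_idem_ordering d As Es \<and>
     (\<forall>i\<le>d. \<forall>j\<le>d.
        ((i > j + 1 \<or> j > i + 1) \<longrightarrow> E i * As * E j = 0\<^sub>m (d+1) (d+1)) \<and>
        ((i = j + 1 \<or> j = i + 1) \<longrightarrow> E i * As * E j \<noteq> 0\<^sub>m (d+1) (d+1))) \<and>
     (\<forall>i\<le>d. \<forall>j\<le>d.
        ((i > j + 1 \<or> j > i + 1) \<longrightarrow> Es i * A * Es j = 0\<^sub>m (d+1) (d+1)) \<and>
        ((i = j + 1 \<or> j = i + 1) \<longrightarrow> Es i * A * Es j \<noteq> 0\<^sub>m (d+1) (d+1)))"

definition ls_a :: "'a::field mat \<Rightarrow> (nat \<Rightarrow> 'a mat) \<Rightarrow> nat \<Rightarrow> 'a" where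
  "ls_a A Es i = mat_trace (Es i * A)"

definition ls_x :: "'a::field mat \<Rightarrow> (nat \<Rightarrow> 'a mat) \<Rightarrow> nat \<Rightarrow> 'a" where
  "ls_x A Es i = (if i = 0 then 0 else mat_trace (Es i * A * Es (i - 1) * A))"

fun ls_p :: "(nat \<Rightarrow> 'a::field) \<Rightarrow> (nat \<Rightarrow> 'a) \<Rightarrow> nat \<Rightarrow> 'a poly" where
  "ls_p a x 0 = 1"
| "ls_p a x (Suc 0) = [:- a 0, 1:]"
| "ls_p a x (Suc (Suc i)) =
     [:- a (Suc i), 1:] * ls_p a x (Suc i) - Polynomial.smult (x (Suc i)) (ls_p a x i)"

end

theory Submission
  imports Defs
begin

text \<open>
  The primitive idempotents \<open>E\<^sup>*\<^sub>i\<close> of \<open>A\<^sup>*\<close> are simultaneously conjugate to the diagonal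
  matrix units, so they are orthogonal idempotents of rank one summing to the identity:
  \<open>E X E = tr (E X) E\<close>.  Since \<open>A\<close> acts tridiagonally on them, the three-term recurrence
  of the \<open>p\<^sub>i\<close> becomes \<open>p\<^sub>i(A) E\<^sup>*\<^sub>0 = E\<^sup>*\<^sub>i A E\<^sup>*\<^sub>i\<^sub>-\<^sub>1 A \<dots> A E\<^sup>*\<^sub>0\<close> (the lower chain \<open>L\<^sub>i\<close>), and by
  transposition \<open>E\<^sup>*\<^sub>0 p\<^sub>i(A) = E\<^sup>*\<^sub>0 A E\<^sup>*\<^sub>1 \<dots> A E\<^sup>*\<^sub>i\<close> (the upper chain \<open>U\<^sub>i\<close>).  Hence
  \<open>p\<^sub>i(A) E\<^sup>*\<^sub>0 p\<^sub>i(A) = L\<^sub>i U\<^sub>i = tr (U\<^sub>i L\<^sub>i) E\<^sup>*\<^sub>i\<close>, and \<open>U\<^sub>i L\<^sub>i\<close> collapses from the inside,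
  each \<open>E\<^sup>*\<^sub>k\<^sub>-\<^sub>1 A E\<^sup>*\<^sub>k A E\<^sup>*\<^sub>k\<^sub>-\<^sub>1 = x\<^sub>k E\<^sup>*\<^sub>k\<^sub>-\<^sub>1\<close> contributing a factor, to \<open>x\<^sub>1 \<dots> x\<^sub>i E\<^sup>*\<^sub>0\<close>.
  Finally \<open>x\<^sub>k \<noteq> 0\<close>: as \<open>E\<^sup>*\<^sub>k\<close> has rank one, \<open>E\<^sup>*\<^sub>k\<^sub>-\<^sub>1 A E\<^sup>*\<^sub>k M E\<^sup>*\<^sub>k A E\<^sup>*\<^sub>k\<^sub>-\<^sub>1\<close> is a multiple of
  \<open>x\<^sub>k E\<^sup>*\<^sub>k\<^sub>-\<^sub>1\<close> for every \<open>M\<close>, while it is nonzero for a suitable \<open>M\<close> because both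
  \<open>E\<^sup>*\<^sub>k\<^sub>-\<^sub>1 A E\<^sup>*\<^sub>k\<close> and \<open>E\<^sup>*\<^sub>k A E\<^sup>*\<^sub>k\<^sub>-\<^sub>1\<close> are nonzero.
\<close>

lemma mat_trace_mult_comm:
  fixes A B :: "'a::comm_ring_1 mat"
  assumes "A \<in> carrier_mat n m" and "B \<in> carrier_mat m n"
  shows "mat_trace (A * B) = mat_trace (B * A)"
proof -
  have "mat_trace (A * B) = (\<Sum>i<n. \<Sum>k<m. A $$ (i,k) * B $$ (k,i))"
    using assms by (simp add: mat_trace_def scalar_prod_def atLeast0LessThan)
  also have "\<dots> = (\<Sum>k<m. \<Sum>i<n. B $$ (k,i) * A $$ (i,k))"
    by (subst sum.swap) (simp add: mult.commute)
  also have "\<dots> = mat_trace (B * A)"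
    using assms by (simp add: mat_trace_def scalar_prod_def atLeast0LessThan)
  finally show ?thesis .
qed

lemma mat_trace_smult: "A \<in> carrier_mat n n \<Longrightarrow> mat_trace (c \<cdot>\<^sub>m A) = c * mat_trace A"
  by (simp add: mat_trace_def sum_distrib_left)

lemma mat_trace_transpose: "A \<in> carrier_mat n n \<Longrightarrow> mat_trace A\<^sup>T = mat_trace A"
  by (simp add: mat_trace_def)

lemma transpose_smult_mat: "(c \<cdot>\<^sub>m A)\<^sup>T = c \<cdot>\<^sub>m A\<^sup>T"
  by (rule eq_matI) auto

lemma smult_mat_mult_mat_vec:
  assumes "A \<in> carrier_mat n m" and "v \<in> carrier_vec m"
  shows "(c \<cdot>\<^sub>m A) *\<^sub>v v = c \<cdot>\<^sub>v (A *\<^sub>v v)"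
  using assms by (intro eq_vecI) (auto simp: scalar_prod_def sum_distrib_left ac_simps)

lemma smult_vec_eq_zero_scalar:
  assumes "w \<in> carrier_vec n" and "w \<noteq> 0\<^sub>v n" and "(c::'a::field) \<cdot>\<^sub>v w = 0\<^sub>v n"
  shows "c = 0"
proof -
  obtain r where r: "r < n" "w $ r \<noteq> 0"
    using assms(1,2) by (auto simp: vec_eq_iff)
  have "c * w $ r = (c \<cdot>\<^sub>v w) $ r"
    using assms(1) r by simp
  also have "\<dots> = 0"
    using assms(3) r by simp
  finally show ?thesis
    using r by simp
qed

lemma exists_mult_mult_nonzero:
  fixes X Y :: "'a::field mat"
  assumes X: "X \<in> carrier_mat n n" and Y: "Y \<in> carrier_mat n n"
    and "X \<noteq> 0\<^sub>m n n" and "Y \<noteq> 0\<^sub>m n n"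
  obtains M where "M \<in> carrier_mat n n" and "X * M * Y \<noteq> 0\<^sub>m n n"
proof -
  obtain a b where ab: "a < n" "b < n" "X $$ (a, b) \<noteq> 0"
    using X assms(3) by (auto simp: mat_eq_iff)
  obtain c e where ce: "c < n" "e < n" "Y $$ (c, e) \<noteq> 0"
    using Y assms(4) by (auto simp: mat_eq_iff)
  define M :: "'a mat" where "M = mat n n (\<lambda>(r, s). if r = b \<and> s = c then 1 else 0)"
  have XM: "X * M = mat n n (\<lambda>(r, s). if s = c then X $$ (r, b) else 0)"
    using X ab ce by (intro eq_matI) (auto simp: M_def scalar_prod_def if_distrib cong: if_cong)
  have "(X * M * Y) $$ (a, e) = X $$ (a, b) * Y $$ (c, e)"
    using Y ab ce by (simp add: XM scalar_prod_def if_distrib[of "\<lambda>x. x * _"] cong: if_cong)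
  then have "X * M * Y \<noteq> 0\<^sub>m n n"
    using ab ce by (metis index_zero_mat(1) mult_eq_0_iff)
  moreover have "M \<in> carrier_mat n n"
    by (simp add: M_def)
  ultimately show ?thesis
    using that by blast
qed

definition diag_unit_mat :: "nat \<Rightarrow> nat \<Rightarrow> 'a::field mat" where
  "diag_unit_mat n j = mat n n (\<lambda>(r, c). if r = j \<and> c = j then 1 else 0)"

lemma diag_unit_mat_carrier [simp]: "diag_unit_mat n j \<in> carrier_mat n n"
  and dim_diag_unit_mat [simp]: "dim_row (diag_unit_mat n j) = n" "dim_col (diag_unit_mat n j) = n"
  by (simp_all add: diag_unit_mat_def)

lemma diag_unit_mat_mult:
  assumes "K \<in> carrier_mat n m" and "j < n"
  shows "diag_unit_mat n j * K = mat n m (\<lambda>(r, c). if r = j then K $$ (j, c) else 0)"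
  using assms by (intro eq_matI) (auto simp: diag_unit_mat_def scalar_prod_def if_distrib[of "\<lambda>x. x * _"] cong: if_cong)

lemma mult_diag_unit_mat:
  assumes "K \<in> carrier_mat m n" and "j < n"
  shows "K * diag_unit_mat n j = mat m n (\<lambda>(r, c). if c = j then K $$ (r, j) else 0)"
  using assms by (intro eq_matI) (auto simp: diag_unit_mat_def scalar_prod_def if_distrib cong: if_cong)

lemma mult_diag_unit_mat_mult_vec:
  assumes "S \<in> carrier_mat n n" and "c \<in> carrier_vec n" and "i < n"
  shows "(S * diag_unit_mat n i) *\<^sub>v c = c $ i \<cdot>\<^sub>v col S i"
  using assms by (intro eq_vecI) (auto simp: mult_diag_unit_mat scalar_prod_def
      if_distrib[of "\<lambda>x. x * _"] cong: if_cong)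

lemma det_nonzero_if_mult_eq_mult_diag_unit_mat:
  fixes S :: "'a::field mat"
  assumes S: "S \<in> carrier_mat n n" and P: "\<And>i. i < n \<Longrightarrow> P i \<in> carrier_mat n n"
    and PS: "\<And>i. i < n \<Longrightarrow> P i * S = S * diag_unit_mat n i"
    and col: "\<And>i. i < n \<Longrightarrow> col S i \<noteq> 0\<^sub>v n"
  shows "det S \<noteq> 0"
proof -
  have "c = 0\<^sub>v n" if c: "c \<in> carrier_vec n" and Sc: "S *\<^sub>v c = 0\<^sub>v n" for c
  proof (rule eq_vecI)
    fix i assume "i < dim_vec (0\<^sub>v n :: 'a vec)"
    then have i: "i < n"
      by simp
    have "c $ i \<cdot>\<^sub>v col S i = (P i * S) *\<^sub>v c"
      using S c i by (simp add: PS mult_diag_unit_mat_mult_vec)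
    also have "\<dots> = P i *\<^sub>v (S *\<^sub>v c)"
      by (rule assoc_mult_mat_vec[OF P[OF i] S c])
    also have "\<dots> = 0\<^sub>v n"
      using Sc P[OF i] by (intro eq_vecI) auto
    finally show "c $ i = 0\<^sub>v n $ i"
      using smult_vec_eq_zero_scalar[OF _ col[OF i]] S i by simp
  qed (use c in auto)
  then show ?thesis
    using det_0_iff_vec_prod_zero_field[OF S] by blast
qed

section \<open>Rank-one resolutions of the identity\<close>

text \<open>
  The two cancellation axioms say that \<open>E 0 + \<dots> + E d\<close> is the identity, and \<open>E_sandwich\<close>
  says that each \<open>E j\<close> has rank one.
\<close>

locale rank_one_resolution =
  fixes n d :: nat and E :: "nat \<Rightarrow> 'a::field mat"
  assumes E_carrier [simp]: "j \<le> d \<Longrightarrow> E j \<in> carrier_mat n n"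
    and E_mult_E: "j \<le> d \<Longrightarrow> k \<le> d \<Longrightarrow> E j * E k = (if j = k then E j else 0\<^sub>m n n)"
    and zero_if_E_mult_zero:
      "X \<in> carrier_mat n n \<Longrightarrow> (\<And>j. j \<le> d \<Longrightarrow> E j * X = 0\<^sub>m n n) \<Longrightarrow> X = 0\<^sub>m n n"
    and zero_if_mult_E_zero:
      "X \<in> carrier_mat n n \<Longrightarrow> (\<And>j. j \<le> d \<Longrightarrow> X * E j = 0\<^sub>m n n) \<Longrightarrow> X = 0\<^sub>m n n"
    and E_sandwich: "j \<le> d \<Longrightarrow> X \<in> carrier_mat n n \<Longrightarrow> E j * X * E j = mat_trace (E j * X) \<cdot>\<^sub>m E j"
    and mat_trace_E: "j \<le> d \<Longrightarrow> mat_trace (E j) = 1"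

lemma rank_one_resolution_diag_unit_mat:
  "rank_one_resolution (Suc d) d (diag_unit_mat (Suc d) :: nat \<Rightarrow> 'a::field mat)"
proof
  fix j k assume "j \<le> d" "k \<le> d"
  then show "diag_unit_mat (Suc d) j * diag_unit_mat (Suc d) k =
      (if j = k then diag_unit_mat (Suc d) j else 0\<^sub>m (Suc d) (Suc d))"
    by (subst diag_unit_mat_mult[of _ _ "Suc d"]) (auto simp: diag_unit_mat_def)
next
  fix X :: "'a mat"
  assume X: "X \<in> carrier_mat (Suc d) (Suc d)"
    and zero: "\<And>j. j \<le> d \<Longrightarrow> diag_unit_mat (Suc d) j * X = 0\<^sub>m (Suc d) (Suc d)"
  show "X = 0\<^sub>m (Suc d) (Suc d)"
  proof (rule eq_matI)
    fix r c assume "r < dim_row (0\<^sub>m (Suc d) (Suc d) :: 'a mat)" "c < dim_col (0\<^sub>m (Suc d) (Suc d) :: 'a mat)"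
    then show "X $$ (r, c) = 0\<^sub>m (Suc d) (Suc d) $$ (r, c)"
      using zero[of r] X by (force simp: diag_unit_mat_mult mat_eq_iff)
  qed (use X in auto)
next
  fix X :: "'a mat"
  assume X: "X \<in> carrier_mat (Suc d) (Suc d)"
    and zero: "\<And>j. j \<le> d \<Longrightarrow> X * diag_unit_mat (Suc d) j = 0\<^sub>m (Suc d) (Suc d)"
  show "X = 0\<^sub>m (Suc d) (Suc d)"
  proof (rule eq_matI)
    fix r c assume "r < dim_row (0\<^sub>m (Suc d) (Suc d) :: 'a mat)" "c < dim_col (0\<^sub>m (Suc d) (Suc d) :: 'a mat)"
    then show "X $$ (r, c) = 0\<^sub>m (Suc d) (Suc d) $$ (r, c)"
      using zero[of c] X by (force simp: mult_diag_unit_mat mat_eq_iff)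
  qed (use X in auto)
next
  fix j and X :: "'a mat" assume j: "j \<le> d" and X: "X \<in> carrier_mat (Suc d) (Suc d)"
  let ?D = "diag_unit_mat (Suc d) j :: 'a mat"
  have DX: "?D * X = mat (Suc d) (Suc d) (\<lambda>(r, c). if r = j then X $$ (j, c) else 0)"
    using X j by (simp add: diag_unit_mat_mult)
  have "?D * X * ?D = mat (Suc d) (Suc d) (\<lambda>(r, c). if c = j then (?D * X) $$ (r, j) else 0)"
    by (rule mult_diag_unit_mat) (use j mult_carrier_mat[OF diag_unit_mat_carrier X] in auto)
  also have "\<dots> = X $$ (j, j) \<cdot>\<^sub>m ?D"
    unfolding DX using j by (auto simp: diag_unit_mat_def)
  moreover have "mat_trace (?D * X) = X $$ (j, j)"
    using j by (simp add: DX mat_trace_def)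
  ultimately show "?D * X * ?D = mat_trace (?D * X) \<cdot>\<^sub>m ?D"
    by simp
next
  fix j assume "j \<le> d"
  then show "mat_trace (diag_unit_mat (Suc d) j :: 'a mat) = 1"
    by (simp add: mat_trace_def diag_unit_mat_def)
qed simp

lemma rank_one_resolution_conjugate:
  assumes "rank_one_resolution n d F"
    and S: "S \<in> carrier_mat n n" and T: "T \<in> carrier_mat n n"
    and ST: "S * T = 1\<^sub>m n" and TS: "T * S = 1\<^sub>m n"
  shows "rank_one_resolution n d (\<lambda>j. S * F j * T)"
proof -
  interpret F: rank_one_resolution n d F by fact
  note assoc = assoc_mult_mat[of _ n n _ n _ n]
  have TSY: "T * (S * Y) = Y" and STY: "S * (T * Y) = Y" if "Y \<in> carrier_mat n n" for Y
    using that by (subst assoc_mult_mat[symmetric]; use S T ST TS in simp)+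
  have prod_carrier: "F j * Y \<in> carrier_mat n n" "Y * F j \<in> carrier_mat n n"
    "S * Y \<in> carrier_mat n n" "T * Y \<in> carrier_mat n n" "Y * S \<in> carrier_mat n n"
    if "j \<le> d" "Y \<in> carrier_mat n n" for j Y
    using that S T by (metis F.E_carrier mult_carrier_mat)+
  show ?thesis
  proof
    fix j assume "j \<le> d"
    then show "S * F j * T \<in> carrier_mat n n"
      using S T by (metis F.E_carrier mult_carrier_mat)
  next
    fix j k assume j: "j \<le> d" and k: "k \<le> d"
    have "S * F j * T * (S * F k * T) = S * (F j * F k) * T"
      using S T j k by (simp add: assoc TSY prod_carrier)
    then show "S * F j * T * (S * F k * T) = (if j = k then S * F j * T else 0\<^sub>m n n)"
      using F.E_mult_E[OF j k] S T by simp
  next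
    fix X :: "'a mat"
    assume X: "X \<in> carrier_mat n n" and zero: "\<And>j. j \<le> d \<Longrightarrow> S * F j * T * X = 0\<^sub>m n n"
    have "F j * (T * X) = 0\<^sub>m n n" if j: "j \<le> d" for j
    proof -
      have "F j * (T * X) = T * (S * F j * T * X)"
        using S T X j by (simp add: assoc TSY prod_carrier)
      then show ?thesis
        using zero[OF j] T by simp
    qed
    then have "T * X = 0\<^sub>m n n"
      using F.zero_if_E_mult_zero prod_carrier(4)[OF _ X] by blast
    then show "X = 0\<^sub>m n n"
      using STY[OF X] S by simp
  next
    fix X :: "'a mat"
    assume X: "X \<in> carrier_mat n n" and zero: "\<And>j. j \<le> d \<Longrightarrow> X * (S * F j * T) = 0\<^sub>m n n"
    have "X * S * F j = 0\<^sub>m n n" if j: "j \<le> d" for j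
    proof -
      have "X * S * F j = X * (S * F j * T) * S"
        using S T X j by (simp add: assoc TS prod_carrier right_mult_one_mat[OF F.E_carrier])
      then show ?thesis
        using zero[OF j] S by simp
    qed
    then have "X * S = 0\<^sub>m n n"
      using F.zero_if_mult_E_zero prod_carrier(5)[OF _ X] by blast
    then have "X * S * T = 0\<^sub>m n n"
      using T by simp
    then show "X = 0\<^sub>m n n"
      using S T X ST by simp
  next
    fix j and X :: "'a mat" assume j: "j \<le> d" and X: "X \<in> carrier_mat n n"
    define K where "K = T * X * S"
    have K: "K \<in> carrier_mat n n"
      unfolding K_def using S T X by (metis mult_carrier_mat)
    have "S * F j * T * X * (S * F j * T) = S * (F j * K * F j) * T"
      unfolding K_def using S T X j by (simp add: assoc TSY prod_carrier)
    also have "\<dots> = mat_trace (F j * K) \<cdot>\<^sub>m (S * F j * T)"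
      using S T j K
      by (simp add: F.E_sandwich mult_smult_distrib[OF S F.E_carrier[OF j]]
          mult_smult_assoc_mat[OF prod_carrier(3)[OF j F.E_carrier[OF j]] T])
    also have "mat_trace (F j * K) = mat_trace (S * F j * T * X)"
      unfolding K_def using S T X j by (simp add: assoc prod_carrier mat_trace_mult_comm[of S n n])
    finally show "S * F j * T * X * (S * F j * T) = mat_trace (S * F j * T * X) \<cdot>\<^sub>m (S * F j * T)" .
  next
    fix j assume j: "j \<le> d"
    have "mat_trace (S * F j * T) = mat_trace (F j * T * S)"
      using S T j by (simp add: assoc prod_carrier mat_trace_mult_comm[of S n n])
    then show "mat_trace (S * F j * T) = 1"
      using S T TS j F.mat_trace_E by (simp add: assoc right_mult_one_mat[OF F.E_carrier])
  qed
qed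

context rank_one_resolution
begin

lemma dim_E [simp]: "j \<le> d \<Longrightarrow> dim_row (E j) = n" "j \<le> d \<Longrightarrow> dim_col (E j) = n"
  using carrier_matD[OF E_carrier] by auto

lemma eq_if_E_mult_eq:
  assumes X: "X \<in> carrier_mat n n" and Y: "Y \<in> carrier_mat n n"
    and eq: "\<And>j. j \<le> d \<Longrightarrow> E j * X = E j * Y"
  shows "X = Y"
proof -
  have "X - Y = 0\<^sub>m n n"
  proof (rule zero_if_E_mult_zero)
    fix j assume "j \<le> d"
    then show "E j * (X - Y) = 0\<^sub>m n n"
      using X Y eq mult_carrier_mat[OF E_carrier Y] by (simp add: mult_minus_distrib_mat[of _ n n])
  qed (use X Y in \<open>simp add: minus_carrier_mat\<close>)
  then show ?thesis
    using X Y by (auto simp: mat_eq_iff)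
qed

lemma rank_one_resolution_transpose: "rank_one_resolution n d (\<lambda>j. (E j)\<^sup>T)"
proof
  fix j k assume j: "j \<le> d" and k: "k \<le> d"
  have "(E j)\<^sup>T * (E k)\<^sup>T = (E k * E j)\<^sup>T"
    using transpose_mult[OF E_carrier[OF k] E_carrier[OF j]] by simp
  then show "(E j)\<^sup>T * (E k)\<^sup>T = (if j = k then (E j)\<^sup>T else 0\<^sub>m n n)"
    using E_mult_E[OF k j] by auto
next
  fix X :: "'a mat"
  assume X: "X \<in> carrier_mat n n" and zero: "\<And>j. j \<le> d \<Longrightarrow> (E j)\<^sup>T * X = 0\<^sub>m n n"
  have XE: "X\<^sup>T * E j = 0\<^sub>m n n" if "j \<le> d" for j
  proof -
    have "X\<^sup>T * E j = ((E j)\<^sup>T * X)\<^sup>T"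
      using transpose_mult[of "(E j)\<^sup>T" n n X n] X that by simp
    then show ?thesis
      using zero[OF that] by simp
  qed
  have "X\<^sup>T = (0\<^sub>m n n)\<^sup>T"
    using zero_if_mult_E_zero[of "X\<^sup>T"] X XE by simp
  then show "X = 0\<^sub>m n n"
    by (rule transpose_mat_eq[THEN iffD1])
next
  fix X :: "'a mat"
  assume X: "X \<in> carrier_mat n n" and zero: "\<And>j. j \<le> d \<Longrightarrow> X * (E j)\<^sup>T = 0\<^sub>m n n"
  have EX: "E j * X\<^sup>T = 0\<^sub>m n n" if "j \<le> d" for j
  proof -
    have "E j * X\<^sup>T = (X * (E j)\<^sup>T)\<^sup>T"
      using transpose_mult[of X n n "(E j)\<^sup>T" n] X that by simp
    then show ?thesis
      using zero[OF that] by simp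
  qed
  have "X\<^sup>T = (0\<^sub>m n n)\<^sup>T"
    using zero_if_E_mult_zero[of "X\<^sup>T"] X EX by simp
  then show "X = 0\<^sub>m n n"
    by (rule transpose_mat_eq[THEN iffD1])
next
  fix j and X :: "'a mat" assume j: "j \<le> d" and X: "X \<in> carrier_mat n n"
  have Ej: "E j \<in> carrier_mat n n" and XT: "X\<^sup>T \<in> carrier_mat n n"
    using j X by auto
  have "(E j * X\<^sup>T * E j)\<^sup>T = (E j)\<^sup>T * (E j * X\<^sup>T)\<^sup>T"
    using transpose_mult[OF mult_carrier_mat[OF Ej XT] Ej] .
  also have "(E j * X\<^sup>T)\<^sup>T = X * (E j)\<^sup>T"
    using transpose_mult[OF Ej XT] by simp
  finally have "(E j)\<^sup>T * X * (E j)\<^sup>T = (E j * X\<^sup>T * E j)\<^sup>T"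
    using Ej X by simp
  also have "\<dots> = mat_trace (E j * X\<^sup>T) \<cdot>\<^sub>m (E j)\<^sup>T"
    using j X by (simp add: E_sandwich transpose_smult_mat)
  also have "mat_trace (E j * X\<^sup>T) = mat_trace ((E j * X\<^sup>T)\<^sup>T)"
    using mat_trace_transpose[OF mult_carrier_mat[OF Ej XT]] by simp
  also have "\<dots> = mat_trace (X * (E j)\<^sup>T)"
    using Ej XT by (simp add: transpose_mult[of _ n n _ n])
  also have "\<dots> = mat_trace ((E j)\<^sup>T * X)"
    using Ej X by (simp add: mat_trace_mult_comm[of X n n])
  finally show "(E j)\<^sup>T * X * (E j)\<^sup>T = mat_trace ((E j)\<^sup>T * X) \<cdot>\<^sub>m (E j)\<^sup>T" .
qed (simp_all add: mat_trace_transpose[OF E_carrier] mat_trace_E)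

end

section \<open>Primitive idempotents\<close>

lemma smult_shift_mult_eigenvector:
  fixes M :: "'a::field mat"
  assumes M: "M \<in> carrier_mat n n" and "eigenvector M v t"
  shows "(c \<cdot>\<^sub>m (M - s \<cdot>\<^sub>m 1\<^sub>m n)) *\<^sub>v v = (c * (t - s)) \<cdot>\<^sub>v v"
proof -
  have v: "v \<in> carrier_vec n" and Mv: "M *\<^sub>v v = t \<cdot>\<^sub>v v"
    using assms unfolding eigenvector_def by auto
  have Ms: "M - s \<cdot>\<^sub>m 1\<^sub>m n \<in> carrier_mat n n"
    using M by (simp add: minus_carrier_mat)
  have "(c \<cdot>\<^sub>m (M - s \<cdot>\<^sub>m 1\<^sub>m n)) *\<^sub>v v = c \<cdot>\<^sub>v ((M - s \<cdot>\<^sub>m 1\<^sub>m n) *\<^sub>v v)"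
    by (rule smult_mat_mult_mat_vec[OF Ms v])
  also have "(M - s \<cdot>\<^sub>m 1\<^sub>m n) *\<^sub>v v = t \<cdot>\<^sub>v v - s \<cdot>\<^sub>v v"
    using M v by (simp add: minus_mult_distrib_mat_vec smult_mat_mult_mat_vec[of _ n n] Mv)
  also have "c \<cdot>\<^sub>v (t \<cdot>\<^sub>v v - s \<cdot>\<^sub>v v) = (c * (t - s)) \<cdot>\<^sub>v v"
    using v by (intro eq_vecI) (auto simp: algebra_simps)
  finally show ?thesis .
qed

lemma foldr_mult_carrier_mat:
  "(\<And>A. A \<in> set As \<Longrightarrow> A \<in> carrier_mat n n) \<Longrightarrow> foldr (*) As (1\<^sub>m n) \<in> carrier_mat n n"
  by (induction As) (auto simp: mult_carrier_mat[of _ n n])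

lemma foldr_mult_mat_vec_eigenvector:
  fixes F :: "nat \<Rightarrow> 'a::field mat"
  assumes "\<And>j. j \<in> set js \<Longrightarrow> F j \<in> carrier_mat n n"
    and "\<And>j. j \<in> set js \<Longrightarrow> F j *\<^sub>v v = c j \<cdot>\<^sub>v v"
    and v: "v \<in> carrier_vec n"
  shows "foldr (*) (map F js) (1\<^sub>m n) *\<^sub>v v = prod_list (map c js) \<cdot>\<^sub>v v"
  using assms(1,2)
proof (induction js)
  case Nil
  then show ?case using v by simp
next
  case (Cons j js)
  let ?R = "foldr (*) (map F js) (1\<^sub>m n)"
  have R: "?R \<in> carrier_mat n n"
    using Cons.prems by (intro foldr_mult_carrier_mat) auto
  have Fj: "F j \<in> carrier_mat n n" "F j *\<^sub>v v = c j \<cdot>\<^sub>v v"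
    using Cons.prems by auto
  have "(F j * ?R) *\<^sub>v v = F j *\<^sub>v (prod_list (map c js) \<cdot>\<^sub>v v)"
    using Cons R by (simp add: assoc_mult_mat_vec[OF Fj(1) R v])
  also have "\<dots> = prod_list (map c js) \<cdot>\<^sub>v (F j *\<^sub>v v)"
    by (rule mult_mat_vec[OF Fj(1) v])
  also have "\<dots> = prod_list (map c (j # js)) \<cdot>\<^sub>v v"
    using Fj by (simp add: smult_smult_assoc mult.commute)
  finally show ?case
    by simp
qed

lemma prim_idem_carrier:
  assumes "M \<in> carrier_mat (Suc d) (Suc d)"
  shows "prim_idem d M \<theta> i \<in> carrier_mat (Suc d) (Suc d)"
  using assms unfolding prim_idem_def Suc_eq_plus1
  by (intro foldr_mult_carrier_mat) (auto simp: minus_carrier_mat)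

lemma prim_idem_mult_eigenvector:
  assumes M: "M \<in> carrier_mat (Suc d) (Suc d)" and inj: "inj_on \<theta> {..d}"
    and i: "i \<le> d" and k: "k \<le> d" and v: "eigenvector M v (\<theta> k)"
  shows "prim_idem d M \<theta> i *\<^sub>v v = (if k = i then v else 0\<^sub>v (Suc d))"
proof -
  let ?js = "filter (\<lambda>j. j \<noteq> i) [0..<Suc d]"
  let ?c = "\<lambda>j. (\<theta> k - \<theta> j) / (\<theta> i - \<theta> j)"
  define F where "F j = (1 / (\<theta> i - \<theta> j)) \<cdot>\<^sub>m (M - \<theta> j \<cdot>\<^sub>m 1\<^sub>m (Suc d))" for j
  have vc: "v \<in> carrier_vec (Suc d)"
    using v M unfolding eigenvector_def by auto
  have js: "set ?js = {..d} - {i}" "distinct ?js"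
    by auto
  have "prim_idem d M \<theta> i = foldr (*) (map F ?js) (1\<^sub>m (Suc d))"
    unfolding prim_idem_def F_def by (simp only: Suc_eq_plus1)
  also have "\<dots> *\<^sub>v v = prod_list (map ?c ?js) \<cdot>\<^sub>v v"
    using M vc smult_shift_mult_eigenvector[OF M v]
    by (intro foldr_mult_mat_vec_eigenvector) (auto simp: F_def minus_carrier_mat)
  also have "prod_list (map ?c ?js) = (\<Prod>j \<in> {..d} - {i}. ?c j)"
    by (simp only: prod.distinct_set_conv_list[OF js(2), symmetric] js(1))
  also have "\<dots> = (if k = i then 1 else 0)"
  proof (cases "k = i")
    case True
    have "\<theta> i \<noteq> \<theta> j" if "j \<in> {..d} - {i}" for j
      using inj i that by (auto dest: inj_onD)
    then show ?thesis
      using True by (auto intro: prod.neutral)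
  next
    case False
    then show ?thesis
      using k by (auto intro!: prod_zero bexI[of _ k])
  qed
  finally show ?thesis
    using vc by auto
qed

lemma prim_idem_similar_diag_unit_mat:
  fixes M :: "'a::field mat"
  assumes M: "M \<in> carrier_mat (Suc d) (Suc d)" and inj: "inj_on \<theta> {..d}"
    and ev: "\<And>k. k \<le> d \<Longrightarrow> eigenvalue M (\<theta> k)"
  obtains S T where "S \<in> carrier_mat (Suc d) (Suc d)" "T \<in> carrier_mat (Suc d) (Suc d)"
    "S * T = 1\<^sub>m (Suc d)" "T * S = 1\<^sub>m (Suc d)"
    "\<And>i. i \<le> d \<Longrightarrow> prim_idem d M \<theta> i = S * diag_unit_mat (Suc d) i * T"
proof -
  let ?n = "Suc d"
  define v where "v k = find_eigenvector M (\<theta> k)" for k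
  have v: "eigenvector M (v k) (\<theta> k)" if "k \<le> d" for k
    unfolding v_def using find_eigenvector[OF M ev[OF that]] .
  then have vc: "v k \<in> carrier_vec ?n" and v0: "v k \<noteq> 0\<^sub>v ?n" if "k \<le> d" for k
    using that M unfolding eigenvector_def by auto
  define S where "S = mat_of_cols ?n (map v [0..<?n])"
  have S: "S \<in> carrier_mat ?n ?n"
    unfolding S_def by (intro carrier_matI) (simp_all del: upt_Suc)
  have colS: "col S k = v k" if "k < ?n" for k
    unfolding S_def using vc[of k] that by (simp del: upt_Suc)
  have ES: "prim_idem d M \<theta> i * S = S * diag_unit_mat ?n i" if i: "i \<le> d" for i
  proof (rule mat_col_eqI)
    fix k assume "k < dim_col (S * diag_unit_mat ?n i)"
    then have k: "k < ?n"
      by simp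
    have "col (prim_idem d M \<theta> i * S) k = prim_idem d M \<theta> i *\<^sub>v v k"
      by (simp add: col_mult2[OF prim_idem_carrier[OF M] S k] colS[OF k])
    also have "\<dots> = (if k = i then v k else 0\<^sub>v ?n)"
      using prim_idem_mult_eigenvector[OF M inj i _ v] k by simp
    also have "\<dots> = col (S * diag_unit_mat ?n i) k"
      using S k i by (auto simp: mult_diag_unit_mat colS[symmetric] col_def)
    finally show "col (prim_idem d M \<theta> i * S) k = col (S * diag_unit_mat ?n i) k" .
  qed (use S prim_idem_carrier[OF M] in auto)
  have "det S \<noteq> 0"
    using S prim_idem_carrier[OF M] ES colS v0
    by (intro det_nonzero_if_mult_eq_mult_diag_unit_mat[where P = "prim_idem d M \<theta>"]) auto
  then obtain T where T: "T \<in> carrier_mat ?n ?n" "T * S = 1\<^sub>m ?n" "S * T = 1\<^sub>m ?n"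
    using det_non_zero_imp_unit[OF S, of "()"] unfolding Units_def ring_mat_def by auto
  have "prim_idem d M \<theta> i = S * diag_unit_mat ?n i * T" if "i \<le> d" for i
  proof -
    have "prim_idem d M \<theta> i = prim_idem d M \<theta> i * S * T"
      using S T by (simp add: assoc_mult_mat[OF prim_idem_carrier[OF M] S T(1)]
          right_mult_one_mat[OF prim_idem_carrier[OF M]])
    then show ?thesis
      using ES[OF that] by simp
  qed
  with S T that show ?thesis
    by blast
qed

lemma rank_one_resolution_prim_idem:
  assumes M: "M \<in> carrier_mat (Suc d) (Suc d)" and "prim_idem_ordering d M E"
  shows "rank_one_resolution (Suc d) d E"
proof -
  obtain \<theta> where inj: "inj_on \<theta> {..d}" and ev: "\<And>k. k \<le> d \<Longrightarrow> eigenvalue M (\<theta> k)"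
    and E: "\<And>i. i \<le> d \<Longrightarrow> E i = prim_idem d M \<theta> i"
    using assms(2) unfolding prim_idem_ordering_def by blast
  obtain S T where S: "S \<in> carrier_mat (Suc d) (Suc d)" and T: "T \<in> carrier_mat (Suc d) (Suc d)"
    and ST: "S * T = 1\<^sub>m (Suc d)" "T * S = 1\<^sub>m (Suc d)"
    and diag: "\<And>i. i \<le> d \<Longrightarrow> prim_idem d M \<theta> i = S * diag_unit_mat (Suc d) i * T"
    using prim_idem_similar_diag_unit_mat[OF M inj ev] by blast
  have "rank_one_resolution (Suc d) d (\<lambda>i. S * diag_unit_mat (Suc d) i * T)"
    using rank_one_resolution_diag_unit_mat S T ST by (rule rank_one_resolution_conjugate)
  moreover have "\<And>i. i \<le> d \<Longrightarrow> S * diag_unit_mat (Suc d) i * T = E i"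
    using E diag by simp
  ultimately show ?thesis
    unfolding rank_one_resolution_def by simp
qed

section \<open>Evaluating polynomials at matrices\<close>

lemma poly_mat_pCons:
  fixes M :: "'a::comm_ring_1 mat"
  assumes M: "M \<in> carrier_mat n n"
  shows "poly_mat (pCons a p) M = a \<cdot>\<^sub>m 1\<^sub>m n + M * poly_mat p M"
proof (cases "p = 0 \<and> a = 0")
  case True
  then show ?thesis
    using M by (intro eq_matI) (auto simp: poly_mat_def)
next
  case False
  then show ?thesis
    using M by (cases "p = 0") (simp_all add: poly_mat_def)
qed

lemma poly_mat_carrier:
  fixes M :: "'a::comm_ring_1 mat"
  assumes "M \<in> carrier_mat n n"
  shows "poly_mat p M \<in> carrier_mat n n"
  using assms by (induction p) (auto simp: poly_mat_pCons poly_mat_def[of 0] mult_carrier_mat[of _ n n])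

lemma poly_mat_one:
  fixes M :: "'a::comm_ring_1 mat"
  assumes "M \<in> carrier_mat n n"
  shows "poly_mat 1 M = 1\<^sub>m n"
  using assms by (intro eq_matI) (auto simp: one_pCons poly_mat_pCons poly_mat_def[of 0])

lemma poly_mat_add:
  fixes M :: "'a::comm_ring_1 mat"
  assumes M: "M \<in> carrier_mat n n"
  shows "poly_mat (p + q) M = poly_mat p M + poly_mat q M"
proof (induction p arbitrary: q)
  case 0
  then show ?case
    using M poly_mat_carrier[OF M, of q] by (simp add: poly_mat_def[of 0])
next
  case (pCons a p)
  obtain b q' where q: "q = pCons b q'"
    by (cases q)
  have P: "poly_mat p M \<in> carrier_mat n n" and Q: "poly_mat q' M \<in> carrier_mat n n"
    using M by (simp_all add: poly_mat_carrier)
  have "poly_mat (pCons a p + q) M = (a + b) \<cdot>\<^sub>m 1\<^sub>m n + M * (poly_mat p M + poly_mat q' M)"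
    using pCons q by (simp add: poly_mat_pCons[OF M])
  also have "\<dots> = poly_mat (pCons a p) M + poly_mat q M"
    unfolding q poly_mat_pCons[OF M] using M P Q
    by (simp add: mult_add_distrib_mat[OF M P Q]) (intro eq_matI, auto simp: algebra_simps)
  finally show ?case .
qed

lemma poly_mat_smult:
  fixes M :: "'a::comm_ring_1 mat"
  assumes M: "M \<in> carrier_mat n n"
  shows "poly_mat (Polynomial.smult c p) M = c \<cdot>\<^sub>m poly_mat p M"
proof (induction p)
  case 0
  then show ?case
    using M by (intro eq_matI) (auto simp: poly_mat_def[of 0])
next
  case (pCons a p)
  have P: "poly_mat p M \<in> carrier_mat n n"
    using M by (rule poly_mat_carrier)
  have "poly_mat (Polynomial.smult c (pCons a p)) M = (c * a) \<cdot>\<^sub>m 1\<^sub>m n + M * (c \<cdot>\<^sub>m poly_mat p M)"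
    using pCons by (simp add: poly_mat_pCons[OF M])
  also have "\<dots> = c \<cdot>\<^sub>m poly_mat (pCons a p) M"
    unfolding poly_mat_pCons[OF M] using M P
    by (simp add: mult_smult_distrib[OF M P]) (intro eq_matI, auto simp: algebra_simps)
  finally show ?case .
qed

lemma poly_mat_linear_mult:
  fixes M :: "'a::comm_ring_1 mat"
  assumes M: "M \<in> carrier_mat n n"
  shows "poly_mat ([:c, 1:] * q) M = M * poly_mat q M + c \<cdot>\<^sub>m poly_mat q M"
proof -
  have "[:c, 1:] * q = pCons 0 q + Polynomial.smult c q"
    by simp
  then have "poly_mat ([:c, 1:] * q) M = poly_mat (pCons 0 q) M + c \<cdot>\<^sub>m poly_mat q M"
    by (simp only: poly_mat_add[OF M] poly_mat_smult[OF M])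
  also have "poly_mat (pCons 0 q) M = M * poly_mat q M"
    unfolding poly_mat_pCons[OF M] using M poly_mat_carrier[OF M, of q]
    by (intro eq_matI) auto
  finally show ?thesis .
qed

lemma poly_mat_commute:
  fixes M :: "'a::comm_ring_1 mat"
  assumes M: "M \<in> carrier_mat n n"
  shows "M * poly_mat p M = poly_mat p M * M"
proof (induction p)
  case 0
  then show ?case
    using M by (simp add: poly_mat_def[of 0])
next
  case (pCons a p)
  have P: "poly_mat p M \<in> carrier_mat n n"
    using M by (rule poly_mat_carrier)
  have "M * poly_mat (pCons a p) M = a \<cdot>\<^sub>m M + M * (M * poly_mat p M)"
    unfolding poly_mat_pCons[OF M] using M P
    by (simp add: mult_add_distrib_mat[of M n n "a \<cdot>\<^sub>m 1\<^sub>m n" n "M * poly_mat p M"]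
        mult_smult_distrib[OF M one_carrier_mat] mult_carrier_mat[of _ n n])
  also have "\<dots> = a \<cdot>\<^sub>m M + M * (poly_mat p M * M)"
    using pCons by simp
  also have "\<dots> = poly_mat (pCons a p) M * M"
    unfolding poly_mat_pCons[OF M] using M P
    by (simp add: add_mult_distrib_mat[of _ n n] mult_smult_assoc_mat[of _ n n] mult_carrier_mat[of _ n n])
  finally show ?case .
qed

lemma poly_mat_transpose:
  fixes M :: "'a::comm_ring_1 mat"
  assumes M: "M \<in> carrier_mat n n"
  shows "poly_mat p M\<^sup>T = (poly_mat p M)\<^sup>T"
proof (induction p)
  case 0
  then show ?case
    using M by (intro eq_matI) (auto simp: poly_mat_def[of 0])
next
  case (pCons a p)
  have MT: "M\<^sup>T \<in> carrier_mat n n" and P: "poly_mat p M \<in> carrier_mat n n"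
    using M by (simp_all add: poly_mat_carrier)
  have "poly_mat (pCons a p) M\<^sup>T = a \<cdot>\<^sub>m 1\<^sub>m n + (poly_mat p M * M)\<^sup>T"
    using pCons by (simp add: poly_mat_pCons[OF MT] transpose_mult[OF P M])
  also have "\<dots> = (poly_mat (pCons a p) M)\<^sup>T"
    unfolding poly_mat_pCons[OF M] poly_mat_commute[OF M] using M P
    by (intro eq_matI) (auto simp: mult_carrier_mat[of _ n n])
  finally show ?case .
qed

text \<open>At \<open>i = 0\<close> the index \<open>i - 1\<close> truncates to \<open>0\<close>; the hypothesis \<open>x 0 = 0\<close> kills that term.\<close>

lemma ls_p_Suc:
  assumes "x 0 = 0"
  shows "ls_p a x (Suc i) = [:- a i, 1:] * ls_p a x i + Polynomial.smult (- x i) (ls_p a x (i - 1))"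
  using assms by (cases i) simp_all

lemma ls_p_cong:
  "(\<And>j. j < i \<Longrightarrow> a j = a' j) \<Longrightarrow> (\<And>j. j < i \<Longrightarrow> x j = x' j) \<Longrightarrow> ls_p a x i = ls_p a' x' i"
  by (induction a x i rule: ls_p.induct) auto

lemma poly_mat_ls_p_Suc:
  fixes M :: "'a::field mat"
  assumes M: "M \<in> carrier_mat n n" and "x 0 = 0"
  shows "poly_mat (ls_p a x (Suc i)) M = M * poly_mat (ls_p a x i) M
    + (- a i) \<cdot>\<^sub>m poly_mat (ls_p a x i) M + (- x i) \<cdot>\<^sub>m poly_mat (ls_p a x (i - 1)) M"
  unfolding ls_p_Suc[of x, OF assms(2)] poly_mat_add[OF M] poly_mat_linear_mult[OF M] poly_mat_smult[OF M] ..

lemma ls_x_0 [simp]: "ls_x A E 0 = 0"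
  by (simp add: ls_x_def)

section \<open>Chains of idempotents under a tridiagonal action\<close>

fun lower_chain :: "(nat \<Rightarrow> 'a::semiring_1 mat) \<Rightarrow> 'a mat \<Rightarrow> nat \<Rightarrow> 'a mat" where
  "lower_chain E A 0 = E 0"
| "lower_chain E A (Suc i) = E (Suc i) * A * lower_chain E A i"

fun upper_chain :: "(nat \<Rightarrow> 'a::semiring_1 mat) \<Rightarrow> 'a mat \<Rightarrow> nat \<Rightarrow> 'a mat" where
  "upper_chain E A 0 = E 0"
| "upper_chain E A (Suc i) = upper_chain E A i * A * E (Suc i)"

locale tridiagonal_resolution = rank_one_resolution n d E
  for n d :: nat and E :: "nat \<Rightarrow> 'a::field mat" +
  fixes A :: "'a mat"
  assumes A_carrier [simp]: "A \<in> carrier_mat n n"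
    and tridiagonal: "j \<le> d \<Longrightarrow> k \<le> d \<Longrightarrow> Suc k < j \<or> Suc j < k \<Longrightarrow> E j * A * E k = 0\<^sub>m n n"
begin

lemma mult_carrier_sq [simp]: "X \<in> carrier_mat n n \<Longrightarrow> Y \<in> carrier_mat n n \<Longrightarrow> X * Y \<in> carrier_mat n n"
  by (rule mult_carrier_mat)

lemma zero_mult_sq [simp]: "X \<in> carrier_mat n n \<Longrightarrow> 0\<^sub>m n n * X = 0\<^sub>m n n"
  by (simp add: left_mult_zero_mat)

text \<open>
  The matrix laws below carry carrier side conditions with dimensions that do not occur in
  their left-hand sides; fixing all dimensions to \<open>n\<close> lets the simplifier discharge them.
\<close>

lemmas assoc_mult_sq = assoc_mult_mat[of _ n n _ n _ n]
lemmas transpose_mult_sq = transpose_mult[of _ n n _ n]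
lemmas smult_mult_sq = mult_smult_distrib[of _ n n _ n] mult_smult_assoc_mat[of _ n n _ n]
lemmas add_mult_sq = mult_add_distrib_mat[of _ n n _ n] add_mult_distrib_mat[of _ n n _ _ n]

lemma E_A_E: "j \<le> d \<Longrightarrow> E j * A * E j = ls_a A E j \<cdot>\<^sub>m E j"
  unfolding ls_a_def by (rule E_sandwich) simp_all

lemma E_A_E_A_E:
  assumes j: "Suc j \<le> d"
  shows "E j * A * E (Suc j) * A * E j = ls_x A E (Suc j) \<cdot>\<^sub>m E j"
proof -
  have "E j * A * E (Suc j) * A * E j = E j * (A * E (Suc j) * A) * E j"
    using j by (simp add: assoc_mult_sq)
  also have "\<dots> = mat_trace (E j * (A * E (Suc j) * A)) \<cdot>\<^sub>m E j"
    using j by (simp add: E_sandwich)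
  also have "mat_trace (E j * (A * E (Suc j) * A)) = mat_trace ((E j * A) * (E (Suc j) * A))"
    using j by (simp add: assoc_mult_sq)
  also have "\<dots> = mat_trace ((E (Suc j) * A) * (E j * A))"
    using j by (intro mat_trace_mult_comm[of _ n n]) simp_all
  also have "\<dots> = ls_x A E (Suc j)"
    using j by (simp add: ls_x_def assoc_mult_sq)
  finally show ?thesis .
qed

lemma lower_chain_carrier: "i \<le> d \<Longrightarrow> lower_chain E A i \<in> carrier_mat n n"
  by (induction i) simp_all

lemma dim_lower_chain [simp]:
  "i \<le> d \<Longrightarrow> dim_row (lower_chain E A i) = n" "i \<le> d \<Longrightarrow> dim_col (lower_chain E A i) = n"
  using lower_chain_carrier by auto

lemma E_mult_lower_chain:
  assumes "j \<le> d" and "i \<le> d"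
  shows "E j * lower_chain E A i = (if j = i then lower_chain E A i else 0\<^sub>m n n)"
proof (cases i)
  case 0
  then show ?thesis
    using assms E_mult_E by simp
next
  case (Suc k)
  have "E j * lower_chain E A i = (E j * E i) * A * lower_chain E A k"
    using assms Suc by (simp add: assoc_mult_sq lower_chain_carrier)
  also have "\<dots> = (if j = i then E j else 0\<^sub>m n n) * A * lower_chain E A k"
    by (simp only: E_mult_E[OF assms])
  also have "\<dots> = (if j = i then lower_chain E A i else 0\<^sub>m n n)"
    using assms Suc by (simp add: lower_chain_carrier)
  finally show ?thesis .
qed

lemma E_A_lower_chain:
  assumes j: "j \<le> d" and i: "i \<le> d"
  shows "E j * A * lower_chain E A i =
    (if j = Suc i then lower_chain E A j
     else if j = i then ls_a A E i \<cdot>\<^sub>m lower_chain E A i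
     else if Suc j = i then ls_x A E i \<cdot>\<^sub>m lower_chain E A j
     else 0\<^sub>m n n)"
proof -
  let ?L = "lower_chain E A"
  have L: "\<And>k. k \<le> d \<Longrightarrow> ?L k \<in> carrier_mat n n"
    by (rule lower_chain_carrier)
  have EL: "\<And>k. k \<le> d \<Longrightarrow> E k * ?L k = ?L k"
    using E_mult_lower_chain by simp
  have EAL: "E j * A * ?L i = E j * A * E i * ?L i"
    using j i by (simp add: assoc_mult_sq L EL)
  consider (above) "j = Suc i" | (diag) "j = i" | (below) "Suc j = i" | (far) "Suc i < j \<or> Suc j < i"
    by linarith
  then show ?thesis
  proof cases
    case above
    then show ?thesis
      by simp
  next
    case diag
    have "E j * A * ?L i = (E i * A * E i) * ?L i"
      using EAL diag i by (simp add: assoc_mult_sq L)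
    also have "\<dots> = (ls_a A E i \<cdot>\<^sub>m E i) * ?L i"
      by (simp only: E_A_E[OF i])
    also have "\<dots> = ls_a A E i \<cdot>\<^sub>m ?L i"
      using i by (simp add: smult_mult_sq L EL)
    finally show ?thesis
      using diag by simp
  next
    case below
    then have j': "Suc j \<le> d"
      using i by simp
    have "E j * A * ?L (Suc j) = (E j * A * E (Suc j) * A * E j) * ?L j"
      using j' by (simp add: assoc_mult_sq L EL)
    also have "\<dots> = (ls_x A E (Suc j) \<cdot>\<^sub>m E j) * ?L j"
      using j' by (simp only: E_A_E_A_E)
    also have "\<dots> = ls_x A E (Suc j) \<cdot>\<^sub>m ?L j"
      using j' by (simp add: smult_mult_sq L EL)
    finally show ?thesis
      using below by auto
  next
    case far
    then have "E j * A * E i = 0\<^sub>m n n"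
      using j i by (intro tridiagonal) auto
    then show ?thesis
      using EAL far i by (auto simp: L)
  qed
qed

lemma lower_chain_Suc_three_term:
  assumes i: "Suc i \<le> d"
  shows "lower_chain E A (Suc i) = A * lower_chain E A i + (- ls_a A E i) \<cdot>\<^sub>m lower_chain E A i
    + (- ls_x A E i) \<cdot>\<^sub>m lower_chain E A (i - 1)"
proof (rule eq_if_E_mult_eq)
  fix j assume j: "j \<le> d"
  let ?L = "lower_chain E A"
  have L: "\<And>k. k \<le> d \<Longrightarrow> ?L k \<in> carrier_mat n n"
    by (rule lower_chain_carrier)
  have "E j * (A * ?L i + (- ls_a A E i) \<cdot>\<^sub>m ?L i + (- ls_x A E i) \<cdot>\<^sub>m ?L (i - 1))
      = E j * A * ?L i + (- ls_a A E i) \<cdot>\<^sub>m (E j * ?L i) + (- ls_x A E i) \<cdot>\<^sub>m (E j * ?L (i - 1))"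
    using i j by (simp add: add_mult_sq smult_mult_sq assoc_mult_sq L)
  also have "\<dots> = E j * ?L (Suc i)"
    using i j by (cases i) (auto simp: E_A_lower_chain E_mult_lower_chain L simp del: lower_chain.simps
        intro!: eq_matI)
  finally show "E j * ?L (Suc i) = E j * (A * ?L i + (- ls_a A E i) \<cdot>\<^sub>m ?L i
      + (- ls_x A E i) \<cdot>\<^sub>m ?L (i - 1))"
    by simp
qed (use i in \<open>simp_all add: lower_chain_carrier\<close>)

lemma poly_mat_ls_p_mult_E0:
  "i \<le> d \<Longrightarrow> poly_mat (ls_p (ls_a A E) (ls_x A E) i) A * E 0 = lower_chain E A i"
proof (induction i rule: less_induct)
  case (less i)
  let ?P = "\<lambda>k. poly_mat (ls_p (ls_a A E) (ls_x A E) k) A"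
  have P: "\<And>k. ?P k \<in> carrier_mat n n"
    by (simp add: poly_mat_carrier)
  show ?case
  proof (cases i)
    case 0
    then show ?thesis
      by (simp add: poly_mat_one[OF A_carrier])
  next
    case (Suc k)
    have "?P (Suc k) * E 0 = (A * ?P k + (- ls_a A E k) \<cdot>\<^sub>m ?P k + (- ls_x A E k) \<cdot>\<^sub>m ?P (k - 1)) * E 0"
      by (simp add: poly_mat_ls_p_Suc[OF A_carrier])
    also have "\<dots> = A * (?P k * E 0) + (- ls_a A E k) \<cdot>\<^sub>m (?P k * E 0)
        + (- ls_x A E k) \<cdot>\<^sub>m (?P (k - 1) * E 0)"
      using P by (simp add: add_mult_sq smult_mult_sq assoc_mult_sq)
    also have "\<dots> = lower_chain E A (Suc k)"
      using less Suc by (simp add: lower_chain_Suc_three_term del: lower_chain.simps)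
    finally show ?thesis
      using Suc by simp
  qed
qed

lemma ls_a_transpose: "j \<le> d \<Longrightarrow> ls_a A\<^sup>T (\<lambda>j. (E j)\<^sup>T) j = ls_a A E j"
proof -
  assume j: "j \<le> d"
  have "mat_trace ((E j)\<^sup>T * A\<^sup>T) = mat_trace ((A * E j)\<^sup>T)"
    using j by (simp add: transpose_mult_sq)
  also have "\<dots> = mat_trace (E j * A)"
    using j by (simp add: mat_trace_transpose[of _ n] mat_trace_mult_comm[of A n n])
  finally show ?thesis
    unfolding ls_a_def .
qed

lemma ls_x_transpose: "j \<le> d \<Longrightarrow> ls_x A\<^sup>T (\<lambda>j. (E j)\<^sup>T) j = ls_x A E j"
proof -
  assume j: "j \<le> d"
  have "mat_trace ((E j)\<^sup>T * A\<^sup>T * (E (j - 1))\<^sup>T * A\<^sup>T) = mat_trace ((A * E (j - 1) * A * E j)\<^sup>T)"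
    using j by (simp add: transpose_mult_sq assoc_mult_sq)
  also have "\<dots> = mat_trace ((A * E (j - 1) * A) * E j)"
    using j by (simp add: mat_trace_transpose[of _ n])
  also have "\<dots> = mat_trace (E j * (A * E (j - 1) * A))"
    using j by (intro mat_trace_mult_comm[of _ n n]) simp_all
  also have "\<dots> = mat_trace (E j * A * E (j - 1) * A)"
    using j by (simp add: assoc_mult_sq)
  finally show ?thesis
    unfolding ls_x_def by simp
qed

text \<open>Transposition preserves all hypotheses and the scalars \<open>a\<^sub>i, x\<^sub>i\<close> but swaps lower and upper chains.\<close>

lemma tridiagonal_resolution_transpose: "tridiagonal_resolution n d (\<lambda>j. (E j)\<^sup>T) A\<^sup>T"
proof -
  have "(E j)\<^sup>T * A\<^sup>T * (E k)\<^sup>T = 0\<^sub>m n n"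
    if "j \<le> d" "k \<le> d" "Suc k < j \<or> Suc j < k" for j k
  proof -
    have "(E j)\<^sup>T * A\<^sup>T * (E k)\<^sup>T = (E k * A * E j)\<^sup>T"
      using that by (simp add: transpose_mult_sq assoc_mult_sq)
    then show ?thesis
      using that tridiagonal[of k j] by auto
  qed
  then show ?thesis
    by (intro tridiagonal_resolution.intro tridiagonal_resolution_axioms.intro
        rank_one_resolution_transpose) simp_all
qed

lemma upper_chain_eq_transpose:
  "i \<le> d \<Longrightarrow> upper_chain E A i = (lower_chain (\<lambda>j. (E j)\<^sup>T) A\<^sup>T i)\<^sup>T"
proof (induction i)
  case 0
  then show ?case
    by simp
next
  case (Suc i)
  interpret T: tridiagonal_resolution n d "\<lambda>j. (E j)\<^sup>T" "A\<^sup>T"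
    by (rule tridiagonal_resolution_transpose)
  show ?case
    using Suc T.lower_chain_carrier[of i] by (simp add: transpose_mult_sq assoc_mult_sq)
qed

lemma upper_chain_carrier: "i \<le> d \<Longrightarrow> upper_chain E A i \<in> carrier_mat n n"
  by (induction i) simp_all

lemma upper_chain_mult_E: "i \<le> d \<Longrightarrow> upper_chain E A i * E i = upper_chain E A i"
proof (cases i)
  case 0
  then show "upper_chain E A i * E i = upper_chain E A i"
    using E_mult_E by simp
next
  case (Suc k)
  assume i: "i \<le> d"
  have "upper_chain E A i * E i = upper_chain E A k * A * (E i * E i)"
    using i Suc by (simp add: assoc_mult_sq upper_chain_carrier)
  then show ?thesis
    using i Suc E_mult_E[OF i i] by simp
qed

lemma E0_mult_poly_mat_ls_p:
  assumes i: "i \<le> d"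
  shows "E 0 * poly_mat (ls_p (ls_a A E) (ls_x A E) i) A = upper_chain E A i"
proof -
  interpret T: tridiagonal_resolution n d "\<lambda>j. (E j)\<^sup>T" "A\<^sup>T"
    by (rule tridiagonal_resolution_transpose)
  let ?p = "ls_p (ls_a A E) (ls_x A E) i"
  have p: "ls_p (ls_a A\<^sup>T (\<lambda>j. (E j)\<^sup>T)) (ls_x A\<^sup>T (\<lambda>j. (E j)\<^sup>T)) i = ?p"
    using i by (intro ls_p_cong) (simp_all add: ls_a_transpose ls_x_transpose)
  have "(E 0 * poly_mat ?p A)\<^sup>T = poly_mat ?p A\<^sup>T * (E 0)\<^sup>T"
    by (simp add: transpose_mult_sq poly_mat_carrier poly_mat_transpose[OF A_carrier])
  also have "\<dots> = lower_chain (\<lambda>j. (E j)\<^sup>T) A\<^sup>T i"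
    using T.poly_mat_ls_p_mult_E0[OF i] by (simp only: p)
  finally show ?thesis
    using upper_chain_eq_transpose[OF i] by (metis transpose_transpose)
qed

lemma upper_chain_mult_lower_chain:
  "i \<le> d \<Longrightarrow> upper_chain E A i * lower_chain E A i = (\<Prod>k\<in>{1..i}. ls_x A E k) \<cdot>\<^sub>m E 0"
proof (induction i)
  case 0
  then show ?case
    using E_mult_E[of 0 0] by (auto intro!: eq_matI)
next
  case (Suc i)
  let ?U = "upper_chain E A i" and ?L = "lower_chain E A i" and ?x = "ls_x A E (Suc i)"
  have i: "i \<le> d"
    using Suc by simp
  have UL: "?U \<in> carrier_mat n n" "?L \<in> carrier_mat n n"
    using i by (simp_all add: upper_chain_carrier lower_chain_carrier)
  have "upper_chain E A (Suc i) * lower_chain E A (Suc i) = ?U * A * (E (Suc i) * E (Suc i)) * A * ?L"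
    using Suc UL by (simp add: assoc_mult_sq)
  also have "\<dots> = (?U * E i) * A * E (Suc i) * A * (E i * ?L)"
    using Suc i E_mult_E[of "Suc i" "Suc i"] upper_chain_mult_E[OF i] E_mult_lower_chain[OF i i] by simp
  also have "\<dots> = ?U * (E i * A * E (Suc i) * A * E i) * ?L"
    using Suc UL by (simp add: assoc_mult_sq)
  also have "\<dots> = ?U * (?x \<cdot>\<^sub>m E i) * ?L"
    using Suc by (simp only: E_A_E_A_E)
  also have "\<dots> = ?x \<cdot>\<^sub>m (?U * E i * ?L)"
    using UL i by (simp add: smult_mult_sq assoc_mult_sq)
  also have "\<dots> = ?x \<cdot>\<^sub>m ((\<Prod>k\<in>{1..i}. ls_x A E k) \<cdot>\<^sub>m E 0)"
    using Suc i upper_chain_mult_E[OF i] by simp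
  also have "\<dots> = (\<Prod>k\<in>{1..Suc i}. ls_x A E k) \<cdot>\<^sub>m E 0"
    by (intro eq_matI) (auto simp: atLeastAtMostSuc_conv)
  finally show ?case .
qed

lemma ls_x_nonzero:
  assumes j: "Suc j \<le> d"
    and up: "E j * A * E (Suc j) \<noteq> 0\<^sub>m n n" and down: "E (Suc j) * A * E j \<noteq> 0\<^sub>m n n"
  shows "ls_x A E (Suc j) \<noteq> 0"
proof
  assume x0: "ls_x A E (Suc j) = 0"
  obtain M where M: "M \<in> carrier_mat n n"
    and nz: "E j * A * E (Suc j) * M * (E (Suc j) * A * E j) \<noteq> 0\<^sub>m n n"
    using exists_mult_mult_nonzero[OF _ _ up down] j by auto
  have "E j * A * E (Suc j) * M * (E (Suc j) * A * E j) = E j * A * (E (Suc j) * M * E (Suc j)) * A * E j"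
    using j M by (simp add: assoc_mult_sq)
  also have "\<dots> = E j * A * (mat_trace (E (Suc j) * M) \<cdot>\<^sub>m E (Suc j)) * A * E j"
    using j M by (simp only: E_sandwich)
  also have "\<dots> = mat_trace (E (Suc j) * M) \<cdot>\<^sub>m (E j * A * E (Suc j) * A * E j)"
    using j M by (simp add: smult_mult_sq assoc_mult_sq)
  also have "\<dots> = mat_trace (E (Suc j) * M) \<cdot>\<^sub>m (ls_x A E (Suc j) \<cdot>\<^sub>m E j)"
    by (simp only: E_A_E_A_E[OF j])
  also have "\<dots> = 0\<^sub>m n n"
    using j x0 by (intro eq_matI) auto
  finally show False
    using nz by simp
qed

lemma prod_ls_x_nonzero:
  assumes "\<And>j. Suc j \<le> d \<Longrightarrow> E j * A * E (Suc j) \<noteq> 0\<^sub>m n n"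
    and "\<And>j. Suc j \<le> d \<Longrightarrow> E (Suc j) * A * E j \<noteq> 0\<^sub>m n n" and "i \<le> d"
  shows "(\<Prod>k\<in>{1..i}. ls_x A E k) \<noteq> 0"
proof -
  have "ls_x A E k \<noteq> 0" if k: "k \<in> {1..i}" for k
  proof -
    obtain j where "k = Suc j"
      using k by (cases k) auto
    moreover have "Suc j \<le> d"
      using k \<open>k = Suc j\<close> assms(3) by simp
    ultimately show ?thesis
      using assms(1,2) ls_x_nonzero by blast
  qed
  then show ?thesis
    by simp
qed

lemma ls_p_E0_sandwich:
  assumes i: "i \<le> d"
  shows "poly_mat (ls_p (ls_a A E) (ls_x A E) i) A * E 0 * poly_mat (ls_p (ls_a A E) (ls_x A E) i) A
    = (\<Prod>k\<in>{1..i}. ls_x A E k) \<cdot>\<^sub>m E i"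
proof -
  let ?P = "poly_mat (ls_p (ls_a A E) (ls_x A E) i) A"
  let ?U = "upper_chain E A i" and ?L = "lower_chain E A i"
  have P: "?P \<in> carrier_mat n n"
    by (simp add: poly_mat_carrier)
  have UL: "?U \<in> carrier_mat n n" "?L \<in> carrier_mat n n"
    using i by (simp_all add: upper_chain_carrier lower_chain_carrier)
  have E0: "E 0 * E 0 = E 0"
    using E_mult_E by simp
  have "?P * E 0 * ?P = ?P * (E 0 * E 0) * ?P"
    by (simp only: E0)
  also have "\<dots> = (?P * E 0) * (E 0 * ?P)"
    using P by (simp add: assoc_mult_sq)
  also have "\<dots> = ?L * ?U"
    using i by (simp only: poly_mat_ls_p_mult_E0 E0_mult_poly_mat_ls_p)
  also have "\<dots> = (E i * ?L) * (?U * E i)"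
    using E_mult_lower_chain[OF i i] upper_chain_mult_E[OF i] by simp
  also have "\<dots> = E i * (?L * ?U) * E i"
    using i UL by (simp add: assoc_mult_sq)
  also have "\<dots> = mat_trace (E i * (?L * ?U)) \<cdot>\<^sub>m E i"
    using i UL by (simp add: E_sandwich)
  also have "mat_trace (E i * (?L * ?U)) = mat_trace (?U * ?L)"
    using i UL E_mult_lower_chain[OF i i] by (simp add: mat_trace_mult_comm[of ?L n n] assoc_mult_sq[symmetric])
  also have "\<dots> = (\<Prod>k\<in>{1..i}. ls_x A E k)"
    using i by (simp add: upper_chain_mult_lower_chain mat_trace_smult[OF E_carrier[OF le0]] mat_trace_E)
  finally show ?thesis .
qed

end

lemma tridiagonal_resolution_leonard_system:
  assumes "leonard_system d A As E Es"
  shows "tridiagonal_resolution (Suc d) d Es A"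
proof -
  have mf: "multiplicity_free d A" "multiplicity_free d As" and ord: "prim_idem_ordering d As Es"
    and tri: "\<And>i j. i \<le> d \<Longrightarrow> j \<le> d \<Longrightarrow> Suc j < i \<or> Suc i < j \<Longrightarrow> Es i * A * Es j = 0\<^sub>m (Suc d) (Suc d)"
    using assms unfolding leonard_system_def by auto
  have "rank_one_resolution (Suc d) d Es"
    using mf(2) ord by (intro rank_one_resolution_prim_idem) (simp_all add: multiplicity_free_def)
  then show ?thesis
    using mf(1) tri by (intro tridiagonal_resolution.intro tridiagonal_resolution_axioms.intro)
      (simp_all add: multiplicity_free_def)
qed

theorem lemma8p6:
  fixes d :: nat and A As :: "'a::field mat" and E Es :: "nat \<Rightarrow> 'a mat"
  assumes "leonard_system d A As E Es"
  shows "\<forall>i\<le>d.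
           (\<Prod>k\<in>{1..i}. ls_x A Es k) \<noteq> 0 \<and>
           Es i = (1 / (\<Prod>k\<in>{1..i}. ls_x A Es k)) \<cdot>\<^sub>m
                    (poly_mat (ls_p (ls_a A Es) (ls_x A Es) i) A * Es 0 *
                     poly_mat (ls_p (ls_a A Es) (ls_x A Es) i) A)"
proof (intro allI impI)
  fix i assume i: "i \<le> d"
  interpret tridiagonal_resolution "Suc d" d Es A
    using assms by (rule tridiagonal_resolution_leonard_system)
  have "Es j * A * Es (Suc j) \<noteq> 0\<^sub>m (Suc d) (Suc d)" "Es (Suc j) * A * Es j \<noteq> 0\<^sub>m (Suc d) (Suc d)"
    if "Suc j \<le> d" for j
    using assms that unfolding leonard_system_def by auto
  then have "(\<Prod>k\<in>{1..i}. ls_x A Es k) \<noteq> 0"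
    using i by (intro prod_ls_x_nonzero)
  then show "(\<Prod>k\<in>{1..i}. ls_x A Es k) \<noteq> 0 \<and> Es i = (1 / (\<Prod>k\<in>{1..i}. ls_x A Es k)) \<cdot>\<^sub>m
      (poly_mat (ls_p (ls_a A Es) (ls_x A Es) i) A * Es 0 * poly_mat (ls_p (ls_a A Es) (ls_x A Es) i) A)"
    using i by (auto simp: ls_p_E0_sandwich intro!: eq_matI)
qed

end
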